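(* Let $(\Sigma,\mathsf{ar})$ be an at most countable binding signature with associated $F,F_\alpha$, $a^{(n)}$, final $F_\alpha$-coalgebra $T_\alpha$, and maps $[-]_\alpha=g:\lim_n UF^n1\to\lim_n UF_\alpha^n1$ and $\iota_\alpha:UT_\alpha\to\lim_n UF_\alpha^n1$ as below. Identify $\lim_n UF^n1$ with $T_\Sigma^\infty$ via $t\mapsto(t^n)_n$. Then the set $(T_\Sigma^\infty)_{\mathrm{ffv}}$ of infinitary raw terms with finitely many free variables, together with the inclusion into $T_\Sigma^\infty$ and the map $(T_\Sigma^\infty)_{\mathrm{ffv}}\to UT_\alpha$ sending $t$ to the unique element of $T_\alpha$ whose projection to $F_\alpha^n1$ is $a^{(n)}(t^n)$ for all $n$, is a pullback in $\mathsf{Set}$ of $g$ and $\iota_\alpha$.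
   Context: Nominal sets over a countably infinite set $\mathcal V$ of names (sets with an action of the finite permutations of $\mathcal V$ in which every element has a finite support; $\mathsf{Nom}$ with equivariant maps; $U:\mathsf{Nom}\to\mathsf{Set}$ forgetful). $[\mathcal V]X$ is the name-abstraction of $X$ with elements $\langle x\rangle u$. Binding signature: set $\Sigma$ of symbols, each with arity a finite list $(n_1,\dots,n_k)$. $F_\alpha X=\mathcal V+\coprod_{\mathsf{op}}\prod_i[\mathcal V]^{n_i}X$, $FX=\mathcal V+\coprod_{\mathsf{op}}\prod_i(\mathcal V^{n_i}\times X)$, $q_X:FX\to F_\alpha X$ identity on $\mathcal V$ and $(x^1,\dots,x^n,u)\mapsto\langle x^1\rangle\cdots\langle x^n\rangle u$ on factors. Terminal chains $F^{n+1}1\to F^n1$ given by $F^n(!)$, likewise for $F_\alpha$; $a^{(0)}=\mathrm{id}_1$, $a^{(n+1)}=q_{F_\alpha^n1}\circ F(a^{(n)})$. $g:\lim UF^n1\to\lim UF_\alpha^n1$ is induced by the $a^{(n)}$, and $\iota_\alpha$ by the canonical cone from the final coalgebra $T_\alpha$ (which is the $\mathsf{Nom}$-limit, i.e. finitely supported compatible tuples, of the terminal chain). Raw infinitary terms $T_\Sigma^\infty$: possibly infinite trees built from variables $x\in\mathcal V$ and nodes $\mathsf{op}(\langle\overline{x_1}\rangle t_1,\dots,\langle\overline{x_k}\rangle t_k)$ with $\overline{x_i}$ a list of $n_i$ names; truncation $t^0=*$, $x^{n+1}=x$, $\mathsf{op}(\langle\overline{x_i}\rangle t_i)^{n+1}=\mathsf{op}(\langle\overline{x_i}\rangle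 t_i^n)$, so that $t^n$ is an element of $F^n1$ (with $1=\{*\}$). Free variables of finite terms as usual ($\mathsf{op}$ binds $\overline{x_i}$ in $t_i$), and $\mathsf{fv}(t)=\bigcup_n\mathsf{fv}(t^n)$; $(T_\Sigma^\infty)_{\mathrm{ffv}}=\{t:\mathsf{fv}(t)\text{ finite}\}$. *)

theory Defs
  imports Main "HOL-Library.Countable_Set"
begin

text \<open>The countably infinite set of names V is represented by nat.\<close>

definition finperm :: "(nat \<Rightarrow> nat) \<Rightarrow> bool" where
  "finperm p \<longleftrightarrow> bij p \<and> finite {x. p x \<noteq> x}"

definition sw :: "nat \<Rightarrow> nat \<Rightarrow> nat \<Rightarrow> nat" where
  "sw a b x = (if x = a then b else if x = b then a else x)"

datatype 'o rtm = Star | Var nat | Op 'o "(nat list \<times> 'o rtm) list"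

fun rperm :: "(nat \<Rightarrow> nat) \<Rightarrow> 'o rtm \<Rightarrow> 'o rtm" where
  "rperm p Star = Star"
| "rperm p (Var x) = Var (p x)"
| "rperm p (Op f args) = Op f (map (\<lambda>(xs, s). (map p xs, rperm p s)) args)"

fun ratoms :: "'o rtm \<Rightarrow> nat set" where
  "ratoms Star = {}"
| "ratoms (Var x) = {x}"
| "ratoms (Op f args) = (\<Union>(xs, s) \<in> set args. set xs \<union> ratoms s)"

fun rfv :: "'o rtm \<Rightarrow> nat set" where
  "rfv Star = {}"
| "rfv (Var x) = {x}"
| "rfv (Op f args) = (\<Union>(xs, s) \<in> set args. rfv s - set xs)"

text \<open>The underlying set of F^n 1 (F^0 1 = 1 = {*}).\<close>
primrec Fn :: "'o set \<Rightarrow> ('o \<Rightarrow> nat list) \<Rightarrow> nat \<Rightarrow> 'o rtm set" where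
  "Fn S ar 0 = {Star}"
| "Fn S ar (Suc n) = range Var \<union>
     {Op f args | f args. f \<in> S \<and> length args = length (ar f) \<and>
        (\<forall>i < length args. length (fst (args ! i)) = ar f ! i \<and> snd (args ! i) \<in> Fn S ar n)}"

text \<open>F^n(!) : F^(n+1) 1 \<rightarrow> F^n 1 (truncation).\<close>
fun rtrunc :: "nat \<Rightarrow> 'o rtm \<Rightarrow> 'o rtm" where
  "rtrunc 0 t = Star"
| "rtrunc (Suc n) Star = Star"
| "rtrunc (Suc n) (Var x) = Var x"
| "rtrunc (Suc n) (Op f args) = Op f (map (\<lambda>(xs, s). (xs, rtrunc n s)) args)"

text \<open>Equality of iterated abstractions <x1>...<xk>u = <y1>...<yk>v in [V]^k X,
  where R is equality in X: <x>U = <y>W iff (x c).U = (y c).W for some c fresh for x,y,U,W.\<close>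
fun absEq :: "('o rtm \<Rightarrow> 'o rtm \<Rightarrow> bool) \<Rightarrow> nat list \<times> 'o rtm \<Rightarrow> nat list \<times> 'o rtm \<Rightarrow> bool" where
  "absEq R ([], u) ([], v) = R u v"
| "absEq R (x # xs, u) (y # ys, v) =
     (\<exists>c. c \<noteq> x \<and> c \<noteq> y \<and> c \<notin> set xs \<and> c \<notin> set ys \<and> c \<notin> ratoms u \<and> c \<notin> ratoms v \<and>
        absEq R (map (sw x c) xs, rperm (sw x c) u) (map (sw y c) ys, rperm (sw y c) v))"
| "absEq R _ _ = False"

text \<open>Equality in F_alpha^n 1 of the images a^(n) of elements of F^n 1.\<close>
primrec alpha :: "nat \<Rightarrow> 'o rtm \<Rightarrow> 'o rtm \<Rightarrow> bool" where
  "alpha 0 s t = (s = Star \<and> t = Star)"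
| "alpha (Suc n) s t = (case (s, t) of
      (Var x, Var y) \<Rightarrow> x = y
    | (Op f a, Op g b) \<Rightarrow> f = g \<and> length a = length b \<and>
          (\<forall>i < length a. absEq (alpha n) (a ! i) (b ! i))
    | _ \<Rightarrow> False)"

text \<open>a^(n) : F^n 1 \<rightarrow> F_alpha^n 1; elements of F_alpha^n 1 are represented as the
  fibres of a^(n) (a^(n) is surjective since q is).\<close>
definition acls :: "'o set \<Rightarrow> ('o \<Rightarrow> nat list) \<Rightarrow> nat \<Rightarrow> 'o rtm \<Rightarrow> 'o rtm set" where
  "acls S ar n t = {s \<in> Fn S ar n. alpha n t s}"

definition Fa :: "'o set \<Rightarrow> ('o \<Rightarrow> nat list) \<Rightarrow> nat \<Rightarrow> 'o rtm set set" where
  "Fa S ar n = acls S ar n ` Fn S ar n"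

text \<open>F_alpha^n(!) : F_alpha^(n+1) 1 \<rightarrow> F_alpha^n 1\<close>
definition resA :: "'o set \<Rightarrow> ('o \<Rightarrow> nat list) \<Rightarrow> nat \<Rightarrow> 'o rtm set \<Rightarrow> 'o rtm set" where
  "resA S ar n C = acls S ar n (rtrunc n (SOME s. s \<in> C))"

definition permA :: "(nat \<Rightarrow> nat) \<Rightarrow> 'o rtm set \<Rightarrow> 'o rtm set" where
  "permA p C = rperm p ` C"

text \<open>lim_n U F_alpha^n 1 (compatible tuples)\<close>
definition limA :: "'o set \<Rightarrow> ('o \<Rightarrow> nat list) \<Rightarrow> (nat \<Rightarrow> 'o rtm set) set" where
  "limA S ar = {\<tau>. (\<forall>n. \<tau> n \<in> Fa S ar n) \<and> (\<forall>n. resA S ar n (\<tau> (Suc n)) = \<tau> n)}"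

definition fin_supp :: "(nat \<Rightarrow> 'o rtm set) \<Rightarrow> bool" where
  "fin_supp \<tau> \<longleftrightarrow> (\<exists>A. finite A \<and>
     (\<forall>p. finperm p \<and> (\<forall>a\<in>A. p a = a) \<longrightarrow> (\<forall>n. permA p (\<tau> n) = \<tau> n)))"

text \<open>U T_alpha: the Nom-limit of the terminal chain = finitely supported compatible tuples;
  iota_alpha is the inclusion into limA.\<close>
definition Talpha :: "'o set \<Rightarrow> ('o \<Rightarrow> nat list) \<Rightarrow> (nat \<Rightarrow> 'o rtm set) set" where
  "Talpha S ar = {\<tau> \<in> limA S ar. fin_supp \<tau>}"

definition iota_alpha :: "(nat \<Rightarrow> 'o rtm set) \<Rightarrow> (nat \<Rightarrow> 'o rtm set)" where
  "iota_alpha \<tau> = \<tau>"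

codatatype 'o itm = IVar nat | IOp 'o "(nat list \<times> 'o itm) list"

coinductive iwf :: "'o set \<Rightarrow> ('o \<Rightarrow> nat list) \<Rightarrow> 'o itm \<Rightarrow> bool" for S ar where
  "iwf S ar (IVar x)"
| "f \<in> S \<Longrightarrow> length args = length (ar f) \<Longrightarrow>
   (\<forall>i < length args. length (fst (args ! i)) = ar f ! i \<and> iwf S ar (snd (args ! i))) \<Longrightarrow>
   iwf S ar (IOp f args)"

definition Tinf :: "'o set \<Rightarrow> ('o \<Rightarrow> nat list) \<Rightarrow> 'o itm set" where
  "Tinf S ar = {t. iwf S ar t}"

primrec trunc :: "nat \<Rightarrow> 'o itm \<Rightarrow> 'o rtm" where
  "trunc 0 t = Star"
| "trunc (Suc n) t = (case t of IVar x \<Rightarrow> Var x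
     | IOp f args \<Rightarrow> Op f (map (\<lambda>(xs, s). (xs, trunc n s)) args))"

definition ifv :: "'o itm \<Rightarrow> nat set" where
  "ifv t = (\<Union>n. rfv (trunc n t))"

definition Tffv :: "'o set \<Rightarrow> ('o \<Rightarrow> nat list) \<Rightarrow> 'o itm set" where
  "Tffv S ar = {t \<in> Tinf S ar. finite (ifv t)}"

definition galpha :: "'o set \<Rightarrow> ('o \<Rightarrow> nat list) \<Rightarrow> 'o itm \<Rightarrow> (nat \<Rightarrow> 'o rtm set)" where
  "galpha S ar t = (\<lambda>n. acls S ar n (trunc n t))"

definition phi :: "'o set \<Rightarrow> ('o \<Rightarrow> nat list) \<Rightarrow> 'o itm \<Rightarrow> (nat \<Rightarrow> 'o rtm set)" where
  "phi S ar t = (THE \<tau>. \<tau> \<in> Talpha S ar \<and> (\<forall>n. \<tau> n = acls S ar n (trunc n t)))"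

end

theory Submission
  imports Defs
begin

text \<open>
  Since \<open>\<iota>\<^sub>\<alpha>\<close> is an inclusion, the pullback of \<open>g\<close> and \<open>\<iota>\<^sub>\<alpha>\<close> is the preimage
  \<open>g\<^sup>-\<^sup>1(T\<^sub>\<alpha>)\<close>, so the content of the statement is twofold: \<open>g(t) = (a\<^sub>n(t\<^sup>n))\<^sub>n\<close> is a
  compatible tuple, and it is finitely supported exactly when \<open>t\<close> has finitely many free
  variables. Compatibility holds because \<open>\<alpha>\<close>-equivalence commutes with truncation. For the
  support, a permutation fixing the free variables of a finite term fixes its \<open>\<alpha>\<close>-class;
  conversely, \<open>\<alpha>\<close>-equivalence preserves free variables, so a swap \<open>(x y)\<close> with \<open>x\<close> free
  in \<open>t\<^sup>n\<close> and \<open>y\<close> fresh moves the class of \<open>t\<^sup>n\<close>, whence every support contains \<open>fv(t)\<close>.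
\<close>

lemma snds_pair [simp]: "Basic_BNFs.snds p = {snd p}"
  by (cases p) auto

lemma sw_simps [simp]:
  "sw a b a = b" "sw a b b = a" "x \<noteq> a \<Longrightarrow> x \<noteq> b \<Longrightarrow> sw a b x = x"
  by (auto simp: sw_def)

lemma sw_sw [simp]: "sw a b (sw a b x) = x"
  by (auto simp: sw_def)

lemma sw_comp_sw [simp]: "sw a b \<circ> sw a b = id"
  by (auto simp: sw_def)

lemma bij_sw [simp]: "bij (sw a b)"
  by (metis bij_betw_imageI inj_on_inverseI sw_sw surj_def)

lemma inj_sw [simp]: "inj (sw a b)"
  using bij_sw bij_is_inj by blast

lemma finperm_sw: "finperm (sw a b)"
proof -
  have "{x. sw a b x \<noteq> x} \<subseteq> {a, b}" by (auto simp: sw_def)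
  then show ?thesis unfolding finperm_def using finite_subset by auto
qed

lemma sw_conj: "inj p \<Longrightarrow> sw (p x) (p c) \<circ> p = p \<circ> sw x c"
  by (auto simp: sw_def inj_eq)

lemma sw_image_Diff_fresh: "c \<notin> A \<Longrightarrow> sw x c ` A - {c} = A - {x}"
  by (auto simp: sw_def image_iff split: if_splits)

lemma rperm_rperm: "rperm p (rperm q s) = rperm (p \<circ> q) s"
  by (induction s) (auto simp: case_prod_beta)

lemma rperm_cong: "(\<forall>x\<in>ratoms s. p x = q x) \<Longrightarrow> rperm p s = rperm q s"
proof (induction s)
  case (Op f args)
  then show ?case by (fastforce simp: case_prod_beta intro!: map_cong)
qed auto

lemma rperm_id [simp]: "rperm id s = s"
  by (induction s) (auto simp: case_prod_beta intro: map_idI)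

lemma ratoms_rperm: "ratoms (rperm p s) = p ` ratoms s"
  by (induction s) (auto simp: case_prod_beta image_Un image_UN)

lemma finite_ratoms [simp]: "finite (ratoms s)"
  by (induction s) (auto simp: case_prod_beta)

lemma rfv_rperm: "inj p \<Longrightarrow> rfv (rperm p s) = p ` rfv s"
proof (induction s)
  case (Op f args)
  then show ?case by (auto simp: case_prod_beta image_UN image_set_diff[symmetric])
qed auto

lemma rfv_subset_ratoms: "rfv s \<subseteq> ratoms s"
proof (induction s)
  case (Op f args)
  show ?case
  proof
    fix x assume "x \<in> rfv (Op f args)"
    then obtain xs s where "(xs, s) \<in> set args" "x \<in> rfv s" by auto
    with Op[of "(xs, s)" s] show "x \<in> ratoms (Op f args)" by force
  qed
qed auto

lemma rfv_Op_nth: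
  "rfv (Op f args) = (\<Union>i<length args. rfv (snd (args ! i)) - set (fst (args ! i)))"
proof -
  have "rfv (Op f args) = (\<Union>a\<in>set args. rfv (snd a) - set (fst a))"
    by (simp add: case_prod_beta)
  also have "set args = (\<lambda>i. args ! i) ` {..<length args}"
    by (metis atLeast0LessThan atLeastLessThan_upt list.set_map map_nth)
  finally show ?thesis by simp
qed

lemma rperm_in_Fn: "s \<in> Fn S ar n \<Longrightarrow> rperm p s \<in> Fn S ar n"
  by (induction n arbitrary: s) (auto simp: case_prod_beta)

lemma rtrunc_rperm: "rtrunc n (rperm p u) = rperm p (rtrunc n u)"
proof (induction n arbitrary: u)
  case (Suc n)
  then show ?case by (cases u) (auto simp: case_prod_beta)
qed simp

lemma ratoms_rtrunc: "ratoms (rtrunc n u) \<subseteq> ratoms u"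
proof (induction n arbitrary: u)
  case (Suc n)
  then show ?case by (cases u) (fastforce simp: case_prod_beta)+
qed simp

section \<open>Equality of iterated abstractions\<close>

definition equivariant :: "('o rtm \<Rightarrow> 'o rtm \<Rightarrow> bool) \<Rightarrow> bool" where
  "equivariant R \<longleftrightarrow> (\<forall>p a b. bij p \<longrightarrow> R a b \<longrightarrow> R (rperm p a) (rperm p b))"

lemma absEq_rperm:
  "absEq R X Y \<Longrightarrow> equivariant R \<Longrightarrow> bij p \<Longrightarrow>
   absEq R (map p (fst X), rperm p (snd X)) (map p (fst Y), rperm p (snd Y))"
proof (induction R X Y arbitrary: p rule: absEq.induct)
  case (1 R u v)
  then show ?case by (auto simp: equivariant_def)
next
  case (2 R x xs u y ys v)
  from "2.prems"(1) obtain c where c: "c \<noteq> x" "c \<noteq> y" "c \<notin> set xs" "c \<notin> set ys"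
      "c \<notin> ratoms u" "c \<notin> ratoms v"
    and swapped: "absEq R (map (sw x c) xs, rperm (sw x c) u) (map (sw y c) ys, rperm (sw y c) v)"
    by auto
  have p: "inj p" using "2.prems"(3) bij_is_inj by blast
  have "absEq R (map (p \<circ> sw x c) xs, rperm (p \<circ> sw x c) u)
                (map (p \<circ> sw y c) ys, rperm (p \<circ> sw y c) v)"
    using "2.IH"[OF swapped "2.prems"(2,3)] by (simp add: rperm_rperm)
  then show ?case
    using c p by (auto simp: ratoms_rperm inj_eq sw_conj[symmetric] rperm_rperm[symmetric]
        intro!: exI[of _ "p c"])
qed auto

text \<open>The existential over fresh names in \<^const>\<open>absEq\<close> can be read universally.\<close>

lemma absEq_Cons_fresh:
  assumes R: "equivariant R" and eq: "absEq R (x # xs, u) (y # ys, v)"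
    and d: "d \<noteq> x" "d \<noteq> y" "d \<notin> set xs" "d \<notin> set ys" "d \<notin> ratoms u" "d \<notin> ratoms v"
  shows "absEq R (map (sw x d) xs, rperm (sw x d) u) (map (sw y d) ys, rperm (sw y d) v)"
proof -
  from eq obtain c where c: "c \<noteq> x" "c \<noteq> y" "c \<notin> set xs" "c \<notin> set ys"
      "c \<notin> ratoms u" "c \<notin> ratoms v"
    and swapped: "absEq R (map (sw x c) xs, rperm (sw x c) u) (map (sw y c) ys, rperm (sw y c) v)"
    by auto
  have sw_sw_fresh: "z \<noteq> c \<Longrightarrow> z \<noteq> d \<Longrightarrow> c \<noteq> w \<Longrightarrow> d \<noteq> w \<Longrightarrow> sw c d (sw w c z) = sw w d z"
    for z w by (auto simp: sw_def)
  have "absEq R (map (sw c d \<circ> sw x c) xs, rperm (sw c d \<circ> sw x c) u)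
                (map (sw c d \<circ> sw y c) ys, rperm (sw c d \<circ> sw y c) v)"
    using absEq_rperm[OF swapped R bij_sw] by (simp add: rperm_rperm)
  moreover have "map (sw c d \<circ> sw x c) xs = map (sw x d) xs"
    "map (sw c d \<circ> sw y c) ys = map (sw y d) ys"
    "rperm (sw c d \<circ> sw x c) u = rperm (sw x d) u"
    "rperm (sw c d \<circ> sw y c) v = rperm (sw y d) v"
    using c d by (auto intro!: map_cong rperm_cong sw_sw_fresh)
  ultimately show ?thesis by simp
qed

lemma absEq_sym: "absEq R X Y \<Longrightarrow> (\<And>a b. R a b \<Longrightarrow> R b a) \<Longrightarrow> absEq R Y X"
  by (induction R X Y rule: absEq.induct) auto

lemma absEq_trans:
  "absEq R X Y \<Longrightarrow> absEq R Y Z \<Longrightarrow> equivariant R \<Longrightarrow>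
   (\<And>a b c. R a b \<Longrightarrow> R b c \<Longrightarrow> R a c) \<Longrightarrow> absEq R X Z"
proof (induction R X Y arbitrary: Z rule: absEq.induct)
  case (1 R u v)
  then show ?case by (cases Z; cases "fst Z") auto
next
  case (2 R x xs u y ys v)
  obtain z zs w where Z: "Z = (z # zs, w)"
    using "2.prems"(2) by (cases Z; cases "fst Z") auto
  let ?A = "{x, y, z} \<union> set xs \<union> set ys \<union> set zs \<union> ratoms u \<union> ratoms v \<union> ratoms w"
  obtain c where c: "c \<notin> ?A"
    using ex_new_if_finite[OF infinite_UNIV_nat, of ?A] by auto
  have "absEq R (map (sw x c) xs, rperm (sw x c) u) (map (sw y c) ys, rperm (sw y c) v)"
    using absEq_Cons_fresh[OF "2.prems"(3,1)] c by auto
  moreover have "absEq R (map (sw y c) ys, rperm (sw y c) v) (map (sw z c) zs, rperm (sw z c) w)"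
    using absEq_Cons_fresh[OF "2.prems"(3)] "2.prems"(2) c unfolding Z by auto
  ultimately have "absEq R (map (sw x c) xs, rperm (sw x c) u) (map (sw z c) zs, rperm (sw z c) w)"
    using "2.IH" "2.prems"(3,4) by blast
  then show ?case unfolding Z using c by auto
qed auto

lemma absEq_refl:
  "(\<forall>q. bij q \<longrightarrow> R (rperm q u) (rperm q u)) \<Longrightarrow> absEq R (xs, u) (xs, u)"
proof (induction "length xs" arbitrary: xs u)
  case 0
  then show ?case by (metis absEq.simps(1) bij_id rperm_id length_0_conv)
next
  case (Suc m)
  then obtain x xs' where xs: "xs = x # xs'" by (cases xs) auto
  obtain c where c: "c \<notin> insert x (set xs' \<union> ratoms u)"
    using ex_new_if_finite[OF infinite_UNIV_nat, of "insert x (set xs' \<union> ratoms u)"] by auto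
  have "\<forall>q. bij q \<longrightarrow> R (rperm q (rperm (sw x c) u)) (rperm q (rperm (sw x c) u))"
    using Suc.prems by (simp add: rperm_rperm bij_comp)
  then have "absEq R (map (sw x c) xs', rperm (sw x c) u) (map (sw x c) xs', rperm (sw x c) u)"
    using Suc.hyps xs by simp
  then show ?case using c xs by auto
qed

lemma absEq_map:
  assumes "absEq R X Y"
    and "\<And>u v. R u v \<Longrightarrow> R' (f u) (f v)"
    and "\<And>p u. f (rperm p u) = rperm p (f u)"
    and "\<And>u. ratoms (f u) \<subseteq> ratoms u"
  shows "absEq R' (fst X, f (snd X)) (fst Y, f (snd Y))"
  using assms
proof (induction R X Y rule: absEq.induct)
  case (2 R x xs u y ys v)
  from "2.prems"(1) obtain c where c: "c \<noteq> x" "c \<noteq> y" "c \<notin> set xs" "c \<notin> set ys"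
      "c \<notin> ratoms u" "c \<notin> ratoms v"
    and swapped: "absEq R (map (sw x c) xs, rperm (sw x c) u) (map (sw y c) ys, rperm (sw y c) v)"
    by auto
  have "absEq R' (map (sw x c) xs, f (rperm (sw x c) u)) (map (sw y c) ys, f (rperm (sw y c) v))"
    using "2.IH"[OF swapped "2.prems"(2-4)] by simp
  then show ?case
    using c "2.prems"(4)[of u] "2.prems"(4)[of v] by (auto simp: "2.prems"(3))
qed auto

lemma absEq_rfv:
  "absEq R X Y \<Longrightarrow> (\<And>a b. R a b \<Longrightarrow> rfv a = rfv b) \<Longrightarrow>
   rfv (snd X) - set (fst X) = rfv (snd Y) - set (fst Y)"
proof (induction R X Y rule: absEq.induct)
  case (2 R x xs u y ys v)
  from "2.prems"(1) obtain c where c: "c \<notin> ratoms u" "c \<notin> ratoms v"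
    and swapped: "absEq R (map (sw x c) xs, rperm (sw x c) u) (map (sw y c) ys, rperm (sw y c) v)"
    by auto
  have "rfv (rperm (sw x c) u) - set (map (sw x c) xs) = rfv (rperm (sw y c) v) - set (map (sw y c) ys)"
    using "2.IH"[OF swapped "2.prems"(2)] by simp
  then have "sw x c ` (rfv u - set xs) = sw y c ` (rfv v - set ys)"
    by (simp add: rfv_rperm image_set_diff)
  moreover have "c \<notin> rfv u - set xs" "c \<notin> rfv v - set ys"
    using c rfv_subset_ratoms by auto
  ultimately have "rfv u - set xs - {x} = rfv v - set ys - {y}"
    using sw_image_Diff_fresh by metis
  then show ?case by auto
qed auto

lemma absEq_rperm_fixing_rfv:
  assumes Q_rperm: "\<And>q u. Q u \<Longrightarrow> Q (rperm q u)"
    and R_rperm: "\<And>q u. bij q \<Longrightarrow> Q u \<Longrightarrow> (\<forall>x\<in>rfv u. q x = x) \<Longrightarrow> R u (rperm q u)"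
  shows "bij p \<Longrightarrow> Q u \<Longrightarrow> (\<forall>z\<in>rfv u - set xs. p z = z) \<Longrightarrow>
    absEq R (xs, u) (map p xs, rperm p u)"
proof (induction "length xs" arbitrary: xs u p)
  case 0
  then show ?case using R_rperm by auto
next
  case (Suc m)
  then obtain x xs' where xs: "xs = x # xs'" by (cases xs) auto
  have p: "inj p" using Suc.prems(1) bij_is_inj by blast
  let ?A = "{x, p x} \<union> set xs' \<union> set (map p xs') \<union> ratoms u \<union> ratoms (rperm p u)"
  obtain c where c: "c \<notin> ?A"
    using ex_new_if_finite[OF infinite_UNIV_nat, of ?A] by auto
  \<comment> \<open>after renaming \<open>x\<close> to \<open>c\<close> on the left and \<open>p x\<close> to \<open>c\<close> on the right, the two
    bodies differ by \<open>q\<close>, which again fixes the remaining free names\<close>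
  define q where "q = sw (p x) c \<circ> p \<circ> sw x c"
  have q: "bij q" unfolding q_def using Suc.prems(1) by (simp add: bij_comp)
  have q_fixes: "\<forall>z\<in>rfv (rperm (sw x c) u) - set (map (sw x c) xs'). q z = z"
  proof
    fix z assume "z \<in> rfv (rperm (sw x c) u) - set (map (sw x c) xs')"
    then obtain w where w: "w \<in> rfv u" "w \<notin> set xs'" "z = sw x c w"
      by (auto simp: rfv_rperm)
    have "w \<noteq> c" using w(1) c rfv_subset_ratoms by blast
    show "q z = z"
    proof (cases "w = x")
      case False
      then have "p w = w" using Suc.prems(3) w xs by auto
      moreover from this False p have "w \<noteq> p x" by (metis inj_eq)
      ultimately show ?thesis using w False \<open>w \<noteq> c\<close> by (simp add: q_def)
    qed (use w in \<open>simp add: q_def\<close>)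
  qed
  have "absEq R (map (sw x c) xs', rperm (sw x c) u)
                (map q (map (sw x c) xs'), rperm q (rperm (sw x c) u))"
    using Suc.hyps(1)[of "map (sw x c) xs'"] Suc.hyps(2) xs q Q_rperm[OF Suc.prems(2)] q_fixes
    by auto
  moreover have "map q (map (sw x c) xs') = map (sw (p x) c) (map p xs')"
    and "rperm q (rperm (sw x c) u) = rperm (sw (p x) c) (rperm p u)"
    by (simp_all add: q_def rperm_rperm comp_assoc)
  ultimately have "absEq R (map (sw x c) xs', rperm (sw x c) u)
                (map (sw (p x) c) (map p xs'), rperm (sw (p x) c) (rperm p u))"
    by (simp only:)
  then show ?case unfolding xs using c by (auto simp del: list.map_comp)
qed

section \<open>\<open>\<alpha>\<close>-equivalence of finite raw terms\<close>

lemma alpha_SucE: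
  assumes "alpha (Suc n) a b"
  obtains x where "a = Var x" "b = Var x"
  | f as bs where "a = Op f as" "b = Op f bs" "length as = length bs"
      "\<forall>i < length as. absEq (alpha n) (as ! i) (bs ! i)"
  using assms by (cases a; cases b) auto

lemma alpha_rperm:
  fixes a b :: "'o rtm"
  shows "bij p \<Longrightarrow> alpha n a b \<Longrightarrow> alpha n (rperm p a) (rperm p b)"
proof (induction n arbitrary: p a b)
  case (Suc n)
  have "equivariant (alpha n :: 'o rtm \<Rightarrow> _)" unfolding equivariant_def using Suc.IH by blast
  from Suc.prems(2) show ?case
    by (cases rule: alpha_SucE)
      (auto simp: case_prod_beta dest: absEq_rperm[OF _ \<open>equivariant (alpha n)\<close> Suc.prems(1)])
qed simp

lemma equivariant_alpha: "equivariant (alpha n)"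
  unfolding equivariant_def using alpha_rperm by blast

lemma alpha_sym: "alpha n a b \<Longrightarrow> alpha n b a"
proof (induction n arbitrary: a b)
  case (Suc n)
  from Suc.prems show ?case
    by (cases rule: alpha_SucE) (auto intro: absEq_sym Suc.IH)
qed simp

lemma alpha_trans: "alpha n a b \<Longrightarrow> alpha n b c \<Longrightarrow> alpha n a c"
proof (induction n arbitrary: a b c)
  case (Suc n)
  from Suc.prems(1) show ?case
  proof (cases rule: alpha_SucE)
    case (2 f as bs)
    with Suc.prems(2) obtain cs where c: "c = Op f cs" "length bs = length cs"
      "\<forall>i < length bs. absEq (alpha n) (bs ! i) (cs ! i)"
      by (cases c) auto
    have "absEq (alpha n) (as ! i) (cs ! i)" if "i < length as" for i
    proof (rule absEq_trans[OF _ _ equivariant_alpha])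
      show "absEq (alpha n) (as ! i) (bs ! i)" "absEq (alpha n) (bs ! i) (cs ! i)"
        using 2 c that by auto
    qed (rule Suc.IH)
    with 2 c show ?thesis by simp
  qed (use Suc.prems(2) in \<open>auto elim: alpha_SucE\<close>)
qed simp

lemma alpha_refl: "s \<in> Fn S ar n \<Longrightarrow> alpha n s s"
proof (induction n arbitrary: s)
  case (Suc n)
  have refl: "absEq (alpha n) X X" if "snd X \<in> Fn S ar n" for X
    using that by (cases X) (auto intro!: absEq_refl Suc.IH rperm_in_Fn)
  from Suc.prems show ?case
    by (cases s) (auto intro: refl)
qed simp

lemma alpha_rtrunc: "alpha (Suc n) a b \<Longrightarrow> alpha n (rtrunc n a) (rtrunc n b)"
proof (induction n arbitrary: a b)
  case (Suc n)
  from Suc.prems show ?case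
    by (cases rule: alpha_SucE)
      (auto simp: case_prod_beta intro!: absEq_map[where R = "alpha (Suc n)", simplified]
        Suc.IH rtrunc_rperm ratoms_rtrunc)
qed simp

lemma alpha_rfv: "alpha n a b \<Longrightarrow> rfv a = rfv b"
proof (induction n arbitrary: a b)
  case (Suc n)
  from Suc.prems show ?case
  proof (cases rule: alpha_SucE)
    case (2 f as bs)
    then have "rfv (snd (as ! i)) - set (fst (as ! i)) = rfv (snd (bs ! i)) - set (fst (bs ! i))"
      if "i < length as" for i
      using that by (auto intro!: absEq_rfv Suc.IH)
    with 2 show ?thesis unfolding 2(1,2) rfv_Op_nth by simp
  qed simp
qed simp

lemma alpha_rperm_fixing_rfv:
  "bij p \<Longrightarrow> s \<in> Fn S ar n \<Longrightarrow> (\<forall>x\<in>rfv s. p x = x) \<Longrightarrow> alpha n s (rperm p s)"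
proof (induction n arbitrary: s p)
  case (Suc n)
  show ?case
  proof (cases s)
    case (Op f args)
    have arg: "absEq (alpha n) X (map p (fst X), rperm p (snd X))" if "X \<in> set args" for X
    proof -
      obtain xs u where X: "X = (xs, u)" by fastforce
      have "absEq (alpha n) (xs, u) (map p xs, rperm p u)"
      proof (rule absEq_rperm_fixing_rfv[where Q = "\<lambda>u. u \<in> Fn S ar n"])
        show "u \<in> Fn S ar n"
          using Suc.prems(2) that unfolding Op X by (auto simp: in_set_conv_nth)
        show "\<forall>z\<in>rfv u - set xs. p z = z"
          using Suc.prems(3) that unfolding Op X by fastforce
      qed (auto intro: Suc.IH rperm_in_Fn Suc.prems(1))
      then show ?thesis unfolding X by simp
    qed
    from Suc.prems(2) show ?thesis unfolding Op by (auto simp: case_prod_beta intro: arg)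
  qed (use Suc.prems in auto)
qed simp

lemma acls_cong: "alpha n a b \<Longrightarrow> acls S ar n a = acls S ar n b"
  unfolding acls_def using alpha_sym alpha_trans by blast

lemma acls_self: "a \<in> Fn S ar n \<Longrightarrow> a \<in> acls S ar n a"
  unfolding acls_def using alpha_refl by blast

lemma permA_acls:
  assumes p: "bij p" and s: "s \<in> Fn S ar n"
  shows "permA p (acls S ar n s) = acls S ar n (rperm p s)"
proof
  show "permA p (acls S ar n s) \<subseteq> acls S ar n (rperm p s)"
    unfolding permA_def acls_def using alpha_rperm[OF p] rperm_in_Fn by blast
next
  show "acls S ar n (rperm p s) \<subseteq> permA p (acls S ar n s)"
  proof
    fix s' assume "s' \<in> acls S ar n (rperm p s)"
    then have s': "s' \<in> Fn S ar n" "alpha n (rperm p s) s'" unfolding acls_def by auto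
    have inv: "inv p \<circ> p = id" "p \<circ> inv p = id"
      using bij_is_inj[OF p] bij_is_surj[OF p] surj_iff by auto
    have "alpha n (rperm (inv p) (rperm p s)) (rperm (inv p) s')"
      using alpha_rperm[OF bij_imp_bij_inv[OF p] s'(2)] .
    then have "alpha n s (rperm (inv p) s')" by (simp add: rperm_rperm inv)
    moreover have "rperm (inv p) s' \<in> Fn S ar n" using rperm_in_Fn s'(1) by blast
    moreover have "s' = rperm p (rperm (inv p) s')" by (simp add: rperm_rperm inv)
    ultimately show "s' \<in> permA p (acls S ar n s)" unfolding permA_def acls_def by blast
  qed
qed

lemma trunc_in_Fn: "iwf S ar t \<Longrightarrow> trunc n t \<in> Fn S ar n"
proof (induction n arbitrary: t)
  case (Suc n)
  from Suc.prems show ?case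
    by cases (auto simp: case_prod_beta Suc.IH)
qed simp

lemma rtrunc_trunc: "rtrunc n (trunc (Suc n) t) = trunc n t"
proof (induction n arbitrary: t)
  case (Suc n)
  then show ?case by (cases t) (auto simp: case_prod_beta)
qed simp

lemma galpha_in_limA:
  assumes t: "iwf S ar t"
  shows "galpha S ar t \<in> limA S ar"
proof -
  have "resA S ar n (acls S ar (Suc n) (trunc (Suc n) t)) = acls S ar n (trunc n t)" for n
  proof -
    let ?C = "acls S ar (Suc n) (trunc (Suc n) t)"
    have "trunc (Suc n) t \<in> ?C" using acls_self trunc_in_Fn[OF t] by blast
    then have "(SOME s. s \<in> ?C) \<in> ?C" by (rule someI)
    then have "alpha (Suc n) (trunc (Suc n) t) (SOME s. s \<in> ?C)" unfolding acls_def by blast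
    then have "alpha n (trunc n t) (rtrunc n (SOME s. s \<in> ?C))"
      using alpha_rtrunc rtrunc_trunc by metis
    then show ?thesis unfolding resA_def using acls_cong alpha_sym by metis
  qed
  then show ?thesis unfolding limA_def galpha_def Fa_def using trunc_in_Fn[OF t] by auto
qed

section \<open>Finite support and finitely many free variables\<close>

lemma permA_galpha_fixing_ifv:
  assumes t: "iwf S ar t" and p: "finperm p" "\<forall>a\<in>ifv t. p a = a"
  shows "permA p (galpha S ar t n) = galpha S ar t n"
proof -
  have "bij p" using p(1) unfolding finperm_def by blast
  have "alpha n (trunc n t) (rperm p (trunc n t))"
    using alpha_rperm_fixing_rfv[OF \<open>bij p\<close> trunc_in_Fn[OF t]] p(2) unfolding ifv_def by blast
  then show ?thesis
    unfolding galpha_def permA_acls[OF \<open>bij p\<close> trunc_in_Fn[OF t]] by (rule acls_cong[symmetric])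
qed

lemma ifv_subset_support:
  assumes t: "iwf S ar t" and A: "finite A"
    and supp: "\<And>p n. finperm p \<Longrightarrow> \<forall>a\<in>A. p a = a \<Longrightarrow> permA p (galpha S ar t n) = galpha S ar t n"
  shows "ifv t \<subseteq> A"
proof
  fix x assume "x \<in> ifv t"
  then obtain n where x: "x \<in> rfv (trunc n t)" unfolding ifv_def by blast
  let ?s = "trunc n t"
  show "x \<in> A"
  proof (rule ccontr)
    assume "x \<notin> A"
    obtain y where y: "y \<notin> insert x (A \<union> ratoms ?s)"
      using ex_new_if_finite[OF infinite_UNIV_nat, of "insert x (A \<union> ratoms ?s)"] A by auto
    have "\<forall>a\<in>A. sw x y a = a" using \<open>x \<notin> A\<close> y by (auto simp: sw_def)
    then have "permA (sw x y) (acls S ar n ?s) = acls S ar n ?s"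
      using supp[of "sw x y" n, OF finperm_sw] unfolding galpha_def by simp
    moreover have "rperm (sw x y) ?s \<in> permA (sw x y) (acls S ar n ?s)"
      unfolding permA_def using acls_self[OF trunc_in_Fn[OF t]] by blast
    ultimately have "alpha n ?s (rperm (sw x y) ?s)" unfolding acls_def by auto
    then have "rfv ?s = sw x y ` rfv ?s" using alpha_rfv rfv_rperm[OF inj_sw] by metis
    then have "y \<in> rfv ?s" using x by (metis image_eqI sw_simps(1))
    then show False using y rfv_subset_ratoms by blast
  qed
qed

lemma fin_supp_galpha_iff: "iwf S ar t \<Longrightarrow> fin_supp (galpha S ar t) \<longleftrightarrow> finite (ifv t)"
  unfolding fin_supp_def
  using permA_galpha_fixing_ifv ifv_subset_support finite_subset by metis

lemma galpha_in_Talpha_iff: "t \<in> Tinf S ar \<Longrightarrow> galpha S ar t \<in> Talpha S ar \<longleftrightarrow> t \<in> Tffv S ar"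
  unfolding Talpha_def Tffv_def Tinf_def using galpha_in_limA fin_supp_galpha_iff by blast

lemma ex1_Talpha_galpha:
  assumes "t \<in> Tffv S ar"
  shows "\<exists>!\<tau>. \<tau> \<in> Talpha S ar \<and> (\<forall>n. \<tau> n = acls S ar n (trunc n t))"
proof (rule ex1I[of _ "galpha S ar t"])
  show "galpha S ar t \<in> Talpha S ar \<and> (\<forall>n. galpha S ar t n = acls S ar n (trunc n t))"
    using assms galpha_in_Talpha_iff unfolding Tffv_def by (auto simp: galpha_def)
qed (auto simp: galpha_def)

lemma phi_eq_galpha:
  assumes "t \<in> Tffv S ar"
  shows "phi S ar t = galpha S ar t"
proof -
  have "\<forall>n. phi S ar t n = acls S ar n (trunc n t)"
    using theI'[OF ex1_Talpha_galpha[OF assms]] unfolding phi_def by blast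
  then show ?thesis unfolding galpha_def by auto
qed

theorem proposition5p17:
  fixes S :: "'o set" and ar :: "'o \<Rightarrow> nat list"
  assumes "countable S"
  shows "(\<forall>t \<in> Tffv S ar. \<exists>!\<tau>. \<tau> \<in> Talpha S ar \<and> (\<forall>n. \<tau> n = acls S ar n (trunc n t)))
    \<and> Tffv S ar \<subseteq> Tinf S ar
    \<and> (\<forall>t \<in> Tffv S ar. galpha S ar t = iota_alpha (phi S ar t))
    \<and> (\<forall>(Z :: 'z set) h1 h2.
          (\<forall>z \<in> Z. h1 z \<in> Tinf S ar \<and> h2 z \<in> Talpha S ar \<and> galpha S ar (h1 z) = iota_alpha (h2 z))
          \<longrightarrow> (\<exists>u. (\<forall>z \<in> Z. u z \<in> Tffv S ar \<and> u z = h1 z \<and> phi S ar (u z) = h2 z)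
                  \<and> (\<forall>u'. (\<forall>z \<in> Z. u' z \<in> Tffv S ar \<and> u' z = h1 z \<and> phi S ar (u' z) = h2 z)
                          \<longrightarrow> (\<forall>z \<in> Z. u' z = u z))))"
proof (intro conjI allI impI ballI)
  fix Z :: "'z set" and h1 h2
  assume cone: "\<forall>z \<in> Z. h1 z \<in> Tinf S ar \<and> h2 z \<in> Talpha S ar \<and> galpha S ar (h1 z) = iota_alpha (h2 z)"
  have "h1 z \<in> Tffv S ar \<and> phi S ar (h1 z) = h2 z" if "z \<in> Z" for z
    using cone that galpha_in_Talpha_iff phi_eq_galpha by (metis iota_alpha_def)
  then show "\<exists>u. (\<forall>z \<in> Z. u z \<in> Tffv S ar \<and> u z = h1 z \<and> phi S ar (u z) = h2 z)
      \<and> (\<forall>u'. (\<forall>z \<in> Z. u' z \<in> Tffv S ar \<and> u' z = h1 z \<and> phi S ar (u' z) = h2 z)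
              \<longrightarrow> (\<forall>z \<in> Z. u' z = u z))"
    by (intro exI[of _ h1]) auto
qed (auto simp: Tffv_def iota_alpha_def phi_eq_galpha ex1_Talpha_galpha)

end
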